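(* Let $0<\beta<1$, $h\in\mathbb{R}$, and let $\sigma\in\{-1,1\}^n$ have law $\mathbb{P}(\sigma)=Z^{-1}\exp\{\frac{\beta}{n}\sum_{i<j}\sigma_i\sigma_j+h\sum_i\sigma_i\}$. Let $\sigma'$ be obtained from $\sigma$ by choosing a site $i\in\{1,\dots,n\}$ uniformly at random and resampling $\sigma_i$ from its conditional law under this Gibbs measure given $(\sigma_j)_{j\neq i}$, and let $\sigma''$ be obtained from $\sigma'$ in the same way. Let $W,W',W''$ be $\sum_i\sigma_i,\sum_i\sigma_i',\sum_i\sigma_i''$, let $Q_k=\mathbb{P}[W'=W+k\mid\sigma]$, $q_k=\mathbb{E}Q_k$, $Q_{k,k}=\mathbb{P}[W'=W+k,W''=W'+k\mid\sigma]$, let $m=\frac1n\sum_{i=1}^n\sigma_i$, and let $m_0$ be the unique solution of $m=\tanh(\beta m+h)$. Then there is a constant $C$ depending only on $\beta,h$ such that for $k=\pm2$, \[ \Bigl|Q_k-\frac{1-m_0^2}{4}\Bigr|\le C\Bigl(|m-m_0|+\frac1n\Bigr),\qquad |Q_{k,k}-Q_k^2|=O(n^{-1}), \] and \[ \Bigl|q_k-\frac{1-m_0^2}{4}\Bigr|=O(n^{-1/2}),\qquad \mathrm{Var}(Q_k)=O(n^{-1}), \] as $n\to\infty$.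
   Context: $Z$ is the normalizing constant of the Gibbs measure (Curie–Weiss model). *)

theory Defs
  imports Complex_Main "HOL-Library.FuncSet"
begin

text \<open>Spin configurations on sites 0..n-1 (indices shifted from 1..n), spins are reals in {-1,1}.\<close>
definition conf :: "nat \<Rightarrow> (nat \<Rightarrow> real) set" where
  "conf n = Pi\<^sub>E {..<n} (\<lambda>_. {-1, 1})"

definition ham :: "real \<Rightarrow> real \<Rightarrow> nat \<Rightarrow> (nat \<Rightarrow> real) \<Rightarrow> real" where
  "ham \<beta> h n \<sigma> = \<beta> / real n * (\<Sum>i<n. \<Sum>j<n. if i < j then \<sigma> i * \<sigma> j else 0)
                   + h * (\<Sum>i<n. \<sigma> i)"

definition Zpart :: "real \<Rightarrow> real \<Rightarrow> nat \<Rightarrow> real" where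
  "Zpart \<beta> h n = (\<Sum>\<sigma>\<in>conf n. exp (ham \<beta> h n \<sigma>))"

definition gibbs :: "real \<Rightarrow> real \<Rightarrow> nat \<Rightarrow> (nat \<Rightarrow> real) \<Rightarrow> real" where
  "gibbs \<beta> h n \<sigma> = exp (ham \<beta> h n \<sigma>) / Zpart \<beta> h n"

definition cond_prob :: "real \<Rightarrow> real \<Rightarrow> nat \<Rightarrow> nat \<Rightarrow> real \<Rightarrow> (nat \<Rightarrow> real) \<Rightarrow> real" where
  "cond_prob \<beta> h n i s \<sigma> =
     exp (ham \<beta> h n (\<sigma>(i := s))) /
     (exp (ham \<beta> h n (\<sigma>(i := 1))) + exp (ham \<beta> h n (\<sigma>(i := -1))))"

definition kernel :: "real \<Rightarrow> real \<Rightarrow> nat \<Rightarrow> (nat \<Rightarrow> real) \<Rightarrow> (nat \<Rightarrow> real) \<Rightarrow> real" where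
  "kernel \<beta> h n \<sigma> \<tau> = (1 / real n) *
     (\<Sum>i<n. \<Sum>s\<in>{-1, 1::real}. if \<tau> = \<sigma>(i := s) then cond_prob \<beta> h n i s \<sigma> else 0)"

definition Wsum :: "nat \<Rightarrow> (nat \<Rightarrow> real) \<Rightarrow> real" where
  "Wsum n \<sigma> = (\<Sum>i<n. \<sigma> i)"

definition magn :: "nat \<Rightarrow> (nat \<Rightarrow> real) \<Rightarrow> real" where
  "magn n \<sigma> = Wsum n \<sigma> / real n"

definition Qk :: "real \<Rightarrow> real \<Rightarrow> nat \<Rightarrow> real \<Rightarrow> (nat \<Rightarrow> real) \<Rightarrow> real" where
  "Qk \<beta> h n k \<sigma> = (\<Sum>\<tau>\<in>conf n. if Wsum n \<tau> = Wsum n \<sigma> + k then kernel \<beta> h n \<sigma> \<tau> else 0)"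

definition Qkk :: "real \<Rightarrow> real \<Rightarrow> nat \<Rightarrow> real \<Rightarrow> (nat \<Rightarrow> real) \<Rightarrow> real" where
  "Qkk \<beta> h n k \<sigma> = (\<Sum>\<tau>\<in>conf n. \<Sum>\<rho>\<in>conf n.
      if Wsum n \<tau> = Wsum n \<sigma> + k \<and> Wsum n \<rho> = Wsum n \<tau> + k
      then kernel \<beta> h n \<sigma> \<tau> * kernel \<beta> h n \<tau> \<rho> else 0)"

definition qk :: "real \<Rightarrow> real \<Rightarrow> nat \<Rightarrow> real \<Rightarrow> real" where
  "qk \<beta> h n k = (\<Sum>\<sigma>\<in>conf n. gibbs \<beta> h n \<sigma> * Qk \<beta> h n k \<sigma>)"

definition varQ :: "real \<Rightarrow> real \<Rightarrow> nat \<Rightarrow> real \<Rightarrow> real" where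
  "varQ \<beta> h n k = (\<Sum>\<sigma>\<in>conf n. gibbs \<beta> h n \<sigma> * (Qk \<beta> h n k \<sigma> - qk \<beta> h n k)\<^sup>2)"

definition m0 :: "real \<Rightarrow> real \<Rightarrow> real" where
  "m0 \<beta> h = (THE m. m = tanh (\<beta> * m + h))"

end

theory Submission
  imports Defs
begin

text \<open>Given the other spins, spin \<open>i\<close> equals \<open>\<plusminus>1\<close> with probability \<open>(1 \<plusminus> tanh a\<^sub>i) / 2\<close>,
where \<open>a\<^sub>i = \<beta> (W - \<sigma>\<^sub>i) / n + h\<close> is its local field. Hence \<open>Q\<^sub>2\<^sub>s\<close> (\<open>s = \<plusminus>1\<close>) is an explicit
function of the magnetisation \<open>m\<close>, namely \<open>(1 - s m)/2 \<cdot> (1 + s tanh (\<beta> m + h + \<beta> s / n))/2\<close>,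
which is 1-Lipschitz in \<open>m\<close> and equals \<open>(1 - m\<^sub>0\<^sup>2)/4\<close> at \<open>m = m\<^sub>0\<close>; and \<open>Q\<^sub>2\<^sub>s\<^sub>,\<^sub>2\<^sub>s\<close> is the same
function at \<open>m + 2s/n\<close> times \<open>Q\<^sub>2\<^sub>s\<close>.

The averaged bounds reduce to \<open>E (m - m\<^sub>0)\<^sup>2 = O(1/n)\<close>. Flipping \<open>\<sigma>\<^sub>i\<close> pairs configurations whose
weights are in ratio \<open>exp (\<plusminus>2 a\<^sub>i)\<close>, so the residual \<open>\<sigma>\<^sub>i - tanh a\<^sub>i\<close> is orthogonal to every function
not depending on \<open>\<sigma>\<^sub>i\<close>, and \<open>E [(\<sigma>\<^sub>i - tanh a\<^sub>i) (m - m\<^sub>0)] = O(1/n)\<close>. On the other hand, as \<open>tanh\<close> is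
1-Lipschitz and \<open>\<beta> < 1\<close>, \<open>(1 - \<beta>) (m - m\<^sub>0)\<^sup>2 \<le> (m - tanh (\<beta> m + h)) (m - m\<^sub>0)\<close>, and
\<open>m - tanh (\<beta> m + h)\<close> is the average of the residuals up to \<open>O(1/n)\<close>.\<close>

lemma tanh_diff_le:
  fixes x y :: real
  assumes "x \<le> y"
  shows "tanh y - tanh x \<le> y - x"
proof -
  have cosh_nz: "cosh t \<noteq> 0" for t :: real
    by (metis cosh_real_pos less_irrefl)
  have "x - tanh x \<le> y - tanh y"
  proof (rule DERIV_nonneg_imp_increasing_open[OF assms, where f = "\<lambda>t. t - tanh t"])
    fix t :: real
    have "((\<lambda>t. t - tanh t) has_real_derivative 1 - (1 - (tanh t)\<^sup>2)) (at t)"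
      using cosh_nz by (auto intro!: derivative_eq_intros)
    then show "\<exists>d. ((\<lambda>t. t - tanh t) has_real_derivative d) (at t) \<and> 0 \<le> d"
      by force
  next
    show "continuous_on {x..y} (\<lambda>t. t - tanh t)"
      using cosh_nz by (intro continuous_intros) auto
  qed
  then show ?thesis by simp
qed

lemma abs_tanh_diff_le: "\<bar>tanh x - tanh y\<bar> \<le> \<bar>x - y :: real\<bar>"
  using tanh_diff_le[of x y] tanh_diff_le[of y x] tanh_real_le_iff[of x y] tanh_real_le_iff[of y x]
  by linarith

lemma abs_tanh_le_one: "\<bar>tanh (x::real)\<bar> \<le> 1"
  using tanh_real_bounds[of x] by auto

lemma exp_mult_one_minus_tanh: "exp x * (1 - tanh x) = exp (- x) * (1 + tanh (x::real))"
proof -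
  have "exp x * exp (- x) = 1" by (simp add: exp_minus)
  moreover have "exp x + exp (- x) > 0" by (simp add: add_pos_pos)
  ultimately show ?thesis by (simp add: tanh_altdef field_simps)
qed

lemma m0_fixed_point:
  assumes "\<bar>\<beta>\<bar> < 1"
  shows "m0 \<beta> h = tanh (\<beta> * m0 \<beta> h + h)"
proof -
  let ?g = "\<lambda>m. m - tanh (\<beta> * m + h)"
  have "\<exists>m\<ge>-1. m \<le> 1 \<and> ?g m = 0"
    using tanh_real_bounds[of "\<beta> * -1 + h"] tanh_real_bounds[of "\<beta> * 1 + h"]
  proof (intro IVT allI impI)
    fix m :: real
    show "isCont ?g m"
      by (intro continuous_intros) (metis cosh_real_pos less_irrefl)
  qed auto
  then obtain m where m: "m = tanh (\<beta> * m + h)" by auto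
  have "a = b" if "a = tanh (\<beta> * a + h)" "b = tanh (\<beta> * b + h)" for a b
  proof -
    have "\<bar>a - b\<bar> \<le> \<bar>\<beta> * a + h - (\<beta> * b + h)\<bar>"
      using abs_tanh_diff_le that by metis
    also have "\<dots> = \<bar>\<beta>\<bar> * \<bar>a - b\<bar>"
      by (simp add: abs_mult flip: right_diff_distrib)
    finally have "(1 - \<bar>\<beta>\<bar>) * \<bar>a - b\<bar> \<le> 0" by (simp add: algebra_simps)
    then show ?thesis using assms by (simp add: mult_le_0_iff)
  qed
  with m show ?thesis unfolding m0_def by (metis (mono_tags, lifting) theI)
qed

lemma abs_m0_le_one: "\<bar>\<beta>\<bar> < 1 \<Longrightarrow> \<bar>m0 \<beta> h\<bar> \<le> 1"
  by (metis m0_fixed_point abs_tanh_le_one)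

lemma contraction_sq_le:
  fixes \<beta> h m z :: real
  assumes "z = tanh (\<beta> * z + h)"
  shows "(1 - \<bar>\<beta>\<bar>) * (m - z)\<^sup>2 \<le> (m - tanh (\<beta> * m + h)) * (m - z)"
proof -
  have "\<bar>tanh (\<beta> * m + h) - z\<bar> \<le> \<bar>\<beta>\<bar> * \<bar>m - z\<bar>"
    using abs_tanh_diff_le[of "\<beta> * m + h" "\<beta> * z + h"] assms
    by (simp add: abs_mult flip: right_diff_distrib)
  then have "\<bar>tanh (\<beta> * m + h) - z\<bar> * \<bar>m - z\<bar> \<le> \<bar>\<beta>\<bar> * \<bar>m - z\<bar> * \<bar>m - z\<bar>"
    by (rule mult_right_mono) simp
  then have "(tanh (\<beta> * m + h) - z) * (m - z) \<le> \<bar>\<beta>\<bar> * \<bar>m - z\<bar> * \<bar>m - z\<bar>"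
    by (metis abs_ge_self abs_mult order_trans)
  also have "\<dots> = \<bar>\<beta>\<bar> * (m - z)\<^sup>2"
    by (simp add: power2_eq_square abs_mult_self_eq mult.assoc)
  finally show ?thesis by (simp add: power2_eq_square algebra_simps)
qed

lemma spin_cases: "\<sigma> \<in> conf n \<Longrightarrow> i < n \<Longrightarrow> \<sigma> i = -1 \<or> \<sigma> i = 1"
  unfolding conf_def by auto

lemma abs_spin: "\<sigma> \<in> conf n \<Longrightarrow> i < n \<Longrightarrow> \<bar>\<sigma> i\<bar> = 1"
  using spin_cases by fastforce

lemma finite_conf: "finite (conf n)"
  unfolding conf_def by (intro finite_PiE) auto

lemma conf_nonempty: "conf n \<noteq> {}"
  unfolding conf_def by (simp add: PiE_eq_empty_iff)

lemma conf_update: "\<sigma> \<in> conf n \<Longrightarrow> i < n \<Longrightarrow> s \<in> {-1, 1} \<Longrightarrow> \<sigma>(i := s) \<in> conf n"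
  unfolding conf_def by (auto simp: PiE_def Pi_def extensional_def)

lemma Wsum_update: "i < n \<Longrightarrow> Wsum n (\<sigma>(i := s)) = Wsum n \<sigma> - \<sigma> i + s"
proof -
  assume i: "i < n"
  have "Wsum n (\<sigma>(i := s)) = (\<Sum>j<n. \<sigma> j + (if j = i then s - \<sigma> i else 0))"
    unfolding Wsum_def by (intro sum.cong) auto
  then show ?thesis
    using i by (simp add: sum.distrib Wsum_def)
qed

lemma abs_magn_le_one: "\<sigma> \<in> conf n \<Longrightarrow> \<bar>magn n \<sigma>\<bar> \<le> 1"
proof -
  assume \<sigma>: "\<sigma> \<in> conf n"
  have "\<bar>Wsum n \<sigma>\<bar> \<le> (\<Sum>i<n. \<bar>\<sigma> i\<bar>)"
    unfolding Wsum_def by (rule sum_abs)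
  also have "\<dots> = real n"
    using abs_spin[OF \<sigma>] by simp
  finally show ?thesis
    by (cases "n = 0") (simp_all add: magn_def abs_divide)
qed

lemma sum_upper_pairs:
  "(\<Sum>i<(n::nat). \<Sum>j<n. if i < j then x i * x j else 0) = ((\<Sum>i<n. x i)\<^sup>2 - (\<Sum>i<n. (x i)\<^sup>2)) / (2::real)"
proof (induction n)
  case (Suc n)
  have "(\<Sum>i<Suc n. \<Sum>j<Suc n. if i < j then x i * x j else 0)
      = (\<Sum>i<n. \<Sum>j<n. if i < j then x i * x j else 0) + (\<Sum>i<n. x i) * x n"
    by (simp add: sum.distrib sum_distrib_right)
  also have "\<dots> = ((\<Sum>i<n. x i)\<^sup>2 - (\<Sum>i<n. (x i)\<^sup>2)) / 2 + (\<Sum>i<n. x i) * x n"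
    by (simp only: Suc)
  also have "\<dots> = ((\<Sum>i<Suc n. x i)\<^sup>2 - (\<Sum>i<Suc n. (x i)\<^sup>2)) / 2"
    by (simp add: power2_eq_square field_simps)
  finally show ?case .
qed simp

lemma ham_conf:
  assumes "\<sigma> \<in> conf n"
  shows "ham \<beta> h n \<sigma> = \<beta> / (2 * real n) * ((Wsum n \<sigma>)\<^sup>2 - real n) + h * Wsum n \<sigma>"
proof -
  have "(\<Sum>i<n. (\<sigma> i)\<^sup>2) = (\<Sum>i<n. 1)"
    using spin_cases[OF assms] by (intro sum.cong) fastforce+
  then show ?thesis
    unfolding ham_def sum_upper_pairs by (simp add: Wsum_def)
qed

definition local_field :: "real \<Rightarrow> real \<Rightarrow> nat \<Rightarrow> (nat \<Rightarrow> real) \<Rightarrow> nat \<Rightarrow> real" where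
  "local_field \<beta> h n \<sigma> i = \<beta> * (Wsum n \<sigma> - \<sigma> i) / real n + h"

lemma local_field_update: "i < n \<Longrightarrow> local_field \<beta> h n (\<sigma>(i := t)) i = local_field \<beta> h n \<sigma> i"
  by (simp add: local_field_def Wsum_update)

lemma ham_update_affine:
  assumes "\<sigma> \<in> conf n" "i < n"
  shows "\<exists>K. \<forall>t\<in>{-1, 1}. ham \<beta> h n (\<sigma>(i := t)) = K + t * local_field \<beta> h n \<sigma> i"
proof (intro exI ballI)
  fix t :: real
  assume t: "t \<in> {-1, 1}"
  define S where "S = Wsum n \<sigma> - \<sigma> i"
  define c where "c = \<beta> / (2 * real n)"
  have "ham \<beta> h n (\<sigma>(i := t)) = c * ((S + t)\<^sup>2 - real n) + h * (S + t)"
    using ham_conf[OF conf_update[OF assms t]] Wsum_update[OF assms(2)] by (simp add: S_def c_def)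
  also have "(S + t)\<^sup>2 = S\<^sup>2 + 1 + 2 * t * S"
    using t by (auto simp: power2_eq_square algebra_simps)
  also have "local_field \<beta> h n \<sigma> i = 2 * c * S + h"
    by (simp add: local_field_def S_def c_def)
  then have "c * (S\<^sup>2 + 1 + 2 * t * S - real n) + h * (S + t)
      = (c * (S\<^sup>2 + 1 - real n) + h * S) + t * local_field \<beta> h n \<sigma> i"
    by (simp add: algebra_simps)
  finally show "ham \<beta> h n (\<sigma>(i := t)) = (c * (S\<^sup>2 + 1 - real n) + h * S) + t * local_field \<beta> h n \<sigma> i" .
qed

lemma cond_prob_eq:
  assumes "\<sigma> \<in> conf n" "i < n" "s \<in> {-1, 1}"
  shows "cond_prob \<beta> h n i s \<sigma> = (1 + s * tanh (local_field \<beta> h n \<sigma> i)) / 2"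
proof -
  define a where "a = local_field \<beta> h n \<sigma> i"
  obtain K where K: "\<And>t. t \<in> {-1, 1} \<Longrightarrow> ham \<beta> h n (\<sigma>(i := t)) = K + t * a"
    using ham_update_affine[OF assms(1,2)] unfolding a_def by blast
  have "cond_prob \<beta> h n i s \<sigma> = exp K * exp (s * a) / (exp K * (exp a + exp (- a)))"
    unfolding cond_prob_def using K[of s] K[of 1] K[of "-1"] assms(3)
    by (simp add: exp_add distrib_left flip: exp_add)
  also have "\<dots> = exp (s * a) / (exp a + exp (- a))"
    by simp
  also have "\<dots> = (1 + s * tanh a) / 2"
    using assms(3) add_pos_pos[OF exp_gt_zero exp_gt_zero, of a "- a"]
    by (auto simp: tanh_altdef field_simps)
  finally show ?thesis by (simp add: a_def)
qed

lemma sum_kernel_mult: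
  assumes "\<sigma> \<in> conf n"
  shows "(\<Sum>\<tau>\<in>conf n. kernel \<beta> h n \<sigma> \<tau> * f \<tau>)
       = (\<Sum>i<n. \<Sum>s\<in>{-1, 1}. cond_prob \<beta> h n i s \<sigma> * f (\<sigma>(i := s))) / real n"
proof -
  have "(\<Sum>\<tau>\<in>conf n. kernel \<beta> h n \<sigma> \<tau> * f \<tau>)
      = (\<Sum>i<n. \<Sum>s\<in>{-1, 1}. \<Sum>\<tau>\<in>conf n.
           if \<tau> = \<sigma>(i := s) then cond_prob \<beta> h n i s \<sigma> * f \<tau> else 0) / real n"
    unfolding kernel_def
    by (simp add: sum_distrib_right sum_divide_distrib[symmetric] sum.swap[of _ "conf n"]
        distrib_right if_distrib[of "\<lambda>x. x * f _" for f] cong: if_cong)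
  also have "\<dots> = (\<Sum>i<n. \<Sum>s\<in>{-1, 1}. cond_prob \<beta> h n i s \<sigma> * f (\<sigma>(i := s))) / real n"
  proof (intro arg_cong[where f = "\<lambda>x. x / real n"] sum.cong refl)
    fix i s
    assume "i \<in> {..<n}" "s \<in> {-1, 1::real}"
    then have "\<sigma>(i := s) \<in> conf n"
      using conf_update[OF assms] by simp
    then show "(\<Sum>\<tau>\<in>conf n. if \<tau> = \<sigma>(i := s) then cond_prob \<beta> h n i s \<sigma> * f \<tau> else 0)
        = cond_prob \<beta> h n i s \<sigma> * f (\<sigma>(i := s))"
      by (simp add: sum.delta[OF finite_conf])
  qed
  finally show ?thesis .
qed

text \<open>\<open>(1 - s m)/2\<close> is the fraction of sites with spin \<open>-s\<close>, and \<open>\<beta> m + h + \<beta> s / n\<close> is the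
  local field at each of them.\<close>

definition jump_rate :: "real \<Rightarrow> real \<Rightarrow> nat \<Rightarrow> real \<Rightarrow> real \<Rightarrow> real" where
  "jump_rate \<beta> h n s m = (1 - s * m) / 2 * ((1 + s * tanh (\<beta> * m + h + \<beta> * s / real n)) / 2)"

lemma Qk_eq_jump_rate:
  assumes \<sigma>: "\<sigma> \<in> conf n" and n: "n \<ge> 1" and s: "s \<in> {-1, 1}"
  shows "Qk \<beta> h n (2 * s) \<sigma> = jump_rate \<beta> h n s (magn n \<sigma>)"
proof -
  define P where "P = (1 + s * tanh (\<beta> * magn n \<sigma> + h + \<beta> * s / real n)) / 2"
  let ?jump = "\<lambda>\<tau>. Wsum n \<tau> = Wsum n \<sigma> + 2 * s"
  have "Qk \<beta> h n (2 * s) \<sigma> = (\<Sum>\<tau>\<in>conf n. kernel \<beta> h n \<sigma> \<tau> * (if ?jump \<tau> then 1 else 0))"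
    unfolding Qk_def by (intro sum.cong) auto
  also have "\<dots> = (\<Sum>i<n. \<Sum>t\<in>{-1, 1}. cond_prob \<beta> h n i t \<sigma> * (if ?jump (\<sigma>(i := t)) then 1 else 0)) / real n"
    by (rule sum_kernel_mult[OF \<sigma>])
  also have "\<dots> = (\<Sum>i<n. (if \<sigma> i = - s then 1 else 0) * P) / real n"
  proof (intro arg_cong[where f = "\<lambda>x. x / real n"] sum.cong refl)
    fix i
    assume "i \<in> {..<n}"
    then have i: "i < n" by simp
    have "cond_prob \<beta> h n i s \<sigma> = P" if "\<sigma> i = - s"
    proof -
      have "local_field \<beta> h n \<sigma> i = \<beta> * magn n \<sigma> + h + \<beta> * s / real n"
        using that n by (simp add: local_field_def magn_def field_simps)
      then show ?thesis
        using cond_prob_eq[OF \<sigma> i s] by (simp add: P_def)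
    qed
    moreover have "?jump (\<sigma>(i := t)) \<longleftrightarrow> t = s \<and> \<sigma> i = - s" if "t \<in> {-1, 1}" for t
      using Wsum_update[OF i, of \<sigma> t] spin_cases[OF \<sigma> i] s that by auto
    ultimately show "(\<Sum>t\<in>{-1, 1}. cond_prob \<beta> h n i t \<sigma> * (if ?jump (\<sigma>(i := t)) then 1 else 0))
        = (if \<sigma> i = - s then 1 else 0) * P"
      using s by auto
  qed
  also have "(\<Sum>i<n. (if \<sigma> i = - s then 1 else 0) * P) = (real n - s * Wsum n \<sigma>) / 2 * P"
  proof -
    have "(\<Sum>i<n. (if \<sigma> i = - s then 1 else 0)) = (\<Sum>i<n. (1 - s * \<sigma> i) / (2::real))"
      using spin_cases[OF \<sigma>] s by (intro sum.cong) fastforce+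
    also have "\<dots> = (real n - s * Wsum n \<sigma>) / 2"
      by (simp add: Wsum_def sum_divide_distrib[symmetric] sum_subtractf sum_distrib_left)
    finally show ?thesis
      by (simp flip: sum_distrib_right)
  qed
  finally show ?thesis
    using n by (simp add: jump_rate_def P_def magn_def field_simps)
qed

lemma Qkk_eq_jump_rate_mult_Qk:
  assumes \<sigma>: "\<sigma> \<in> conf n" and n: "n \<ge> 1" and s: "s \<in> {-1, 1}"
  shows "Qkk \<beta> h n (2 * s) \<sigma> = jump_rate \<beta> h n s (magn n \<sigma> + 2 * s / real n) * Qk \<beta> h n (2 * s) \<sigma>"
proof -
  let ?jump = "\<lambda>\<tau>. Wsum n \<tau> = Wsum n \<sigma> + 2 * s"
  have "Qkk \<beta> h n (2 * s) \<sigma> = (\<Sum>\<tau>\<in>conf n. if ?jump \<tau> then kernel \<beta> h n \<sigma> \<tau> * Qk \<beta> h n (2 * s) \<tau> else 0)"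
    unfolding Qkk_def
  proof (rule sum.cong[OF refl])
    fix \<tau>
    show "(\<Sum>\<rho>\<in>conf n. if ?jump \<tau> \<and> Wsum n \<rho> = Wsum n \<tau> + 2 * s
            then kernel \<beta> h n \<sigma> \<tau> * kernel \<beta> h n \<tau> \<rho> else 0)
        = (if ?jump \<tau> then kernel \<beta> h n \<sigma> \<tau> * Qk \<beta> h n (2 * s) \<tau> else 0)"
    proof (cases "?jump \<tau>")
      case True
      have "(\<Sum>\<rho>\<in>conf n. if ?jump \<tau> \<and> Wsum n \<rho> = Wsum n \<tau> + 2 * s
              then kernel \<beta> h n \<sigma> \<tau> * kernel \<beta> h n \<tau> \<rho> else 0)
          = kernel \<beta> h n \<sigma> \<tau> * (\<Sum>\<rho>\<in>conf n. if Wsum n \<rho> = Wsum n \<tau> + 2 * s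
              then kernel \<beta> h n \<tau> \<rho> else 0)"
        unfolding sum_distrib_left using True by (intro sum.cong) auto
      then show ?thesis
        using True by (simp add: Qk_def)
    qed simp
  qed
  also have "\<dots> = (\<Sum>\<tau>\<in>conf n. if ?jump \<tau> then kernel \<beta> h n \<sigma> \<tau> * jump_rate \<beta> h n s (magn n \<sigma> + 2 * s / real n) else 0)"
  proof (rule sum.cong[OF refl])
    fix \<tau>
    assume \<tau>: "\<tau> \<in> conf n"
    have "magn n \<tau> = magn n \<sigma> + 2 * s / real n" if "?jump \<tau>"
      using that n by (simp add: magn_def field_simps)
    then show "(if ?jump \<tau> then kernel \<beta> h n \<sigma> \<tau> * Qk \<beta> h n (2 * s) \<tau> else 0)
        = (if ?jump \<tau> then kernel \<beta> h n \<sigma> \<tau> * jump_rate \<beta> h n s (magn n \<sigma> + 2 * s / real n) else 0)"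
      using Qk_eq_jump_rate[OF \<tau> n s] by simp
  qed
  also have "\<dots> = jump_rate \<beta> h n s (magn n \<sigma> + 2 * s / real n) * Qk \<beta> h n (2 * s) \<sigma>"
    unfolding Qk_def sum_distrib_left by (intro sum.cong) auto
  finally show ?thesis .
qed

lemma abs_rate_product_diff:
  fixes s x x' y y' :: real
  assumes s: "s \<in> {-1, 1}" and x: "\<bar>x\<bar> \<le> 1" and y': "\<bar>y'\<bar> \<le> 1"
  shows "2 * \<bar>(1 - s * x) / 2 * ((1 + s * y) / 2) - (1 - s * x') / 2 * ((1 + s * y') / 2)\<bar>
    \<le> \<bar>x - x'\<bar> + \<bar>y - y'\<bar>"
proof -
  define A where "A = (1 - s * x) * (s * (y - y'))"
  define B where "B = (s * (x' - x)) * (1 + s * y')"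
  have abs_s: "\<bar>s\<bar> = 1"
    using s by auto
  have "\<bar>1 - s * x\<bar> \<le> 2" "\<bar>1 + s * y'\<bar> \<le> 2"
    using s x y' by (auto simp: abs_le_iff)
  then have "\<bar>1 - s * x\<bar> * \<bar>y - y'\<bar> \<le> 2 * \<bar>y - y'\<bar>" "\<bar>x' - x\<bar> * \<bar>1 + s * y'\<bar> \<le> \<bar>x' - x\<bar> * 2"
    by (simp_all add: mult_right_mono mult_left_mono)
  then have "\<bar>A\<bar> \<le> 2 * \<bar>y - y'\<bar>" "\<bar>B\<bar> \<le> 2 * \<bar>x - x'\<bar>"
    unfolding A_def B_def abs_mult abs_s by (simp_all add: abs_minus_commute)
  have "(1 - s * x) / 2 * ((1 + s * y) / 2) - (1 - s * x') / 2 * ((1 + s * y') / 2) = (A + B) / 4"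
    unfolding A_def B_def by (simp add: field_simps)
  also have "\<bar>(A + B) / 4\<bar> \<le> (\<bar>A\<bar> + \<bar>B\<bar>) / 4"
    using abs_triangle_ineq[of A B] by simp
  finally show ?thesis
    using \<open>\<bar>A\<bar> \<le> 2 * \<bar>y - y'\<bar>\<close> \<open>\<bar>B\<bar> \<le> 2 * \<bar>x - x'\<bar>\<close> by simp
qed

lemma abs_jump_rate_le_one:
  assumes "s \<in> {-1, 1}" "\<bar>m\<bar> \<le> 1"
  shows "\<bar>jump_rate \<beta> h n s m\<bar> \<le> 1"
proof -
  have "\<bar>(1 - s * m) / 2\<bar> \<le> 1" "\<bar>(1 + s * tanh (\<beta> * m + h + \<beta> * s / real n)) / 2\<bar> \<le> 1"
    using assms abs_tanh_le_one[of "\<beta> * m + h + \<beta> * s / real n"] by (auto simp: abs_le_iff)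
  then show ?thesis
    unfolding jump_rate_def abs_mult by (metis abs_ge_zero mult_le_one)
qed

lemma jump_rate_near_m0:
  assumes \<beta>: "\<bar>\<beta>\<bar> < 1" and s: "s \<in> {-1, 1}" and m: "\<bar>m\<bar> \<le> 1"
  shows "\<bar>jump_rate \<beta> h n s m - (1 - (m0 \<beta> h)\<^sup>2) / 4\<bar> \<le> \<bar>m - m0 \<beta> h\<bar> + 1 / real n"
proof -
  define z where "z = m0 \<beta> h"
  define T where "T = tanh (\<beta> * m + h + \<beta> * s / real n)"
  have z: "tanh (\<beta> * z + h) = z"
    using m0_fixed_point[OF \<beta>] by (simp add: z_def)
  have "(1 - z\<^sup>2) / 4 = (1 - s * z) / 2 * ((1 + s * z) / 2)"
    using s by (auto simp: power2_eq_square field_simps)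
  also have "\<dots> = (1 - s * z) / 2 * ((1 + s * tanh (\<beta> * z + h)) / 2)"
    by (simp only: z)
  finally have c: "(1 - z\<^sup>2) / 4 = (1 - s * z) / 2 * ((1 + s * tanh (\<beta> * z + h)) / 2)" .
  have rate_diff: "2 * \<bar>jump_rate \<beta> h n s m - (1 - z\<^sup>2) / 4\<bar> \<le> \<bar>m - z\<bar> + \<bar>T - tanh (\<beta> * z + h)\<bar>"
    unfolding c jump_rate_def T_def by (rule abs_rate_product_diff[OF s m abs_tanh_le_one])
  have tanh_diff: "\<bar>T - tanh (\<beta> * z + h)\<bar> \<le> \<bar>m - z\<bar> + 1 / real n"
  proof -
    have "\<bar>T - tanh (\<beta> * z + h)\<bar> \<le> \<bar>\<beta> * (m - z) + \<beta> * s / real n\<bar>"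
      using abs_tanh_diff_le[of "\<beta> * m + h + \<beta> * s / real n" "\<beta> * z + h"]
      by (simp add: T_def algebra_simps)
    also have "\<dots> \<le> \<bar>\<beta>\<bar> * \<bar>m - z\<bar> + \<bar>\<beta>\<bar> / real n"
      using abs_triangle_ineq[of "\<beta> * (m - z)" "\<beta> * s / real n"] s
      by (auto simp: abs_mult abs_divide)
    also have "\<dots> \<le> \<bar>m - z\<bar> + 1 / real n"
      using \<beta> by (intro add_mono mult_left_le_one_le divide_right_mono) auto
    finally show ?thesis .
  qed
  have halve: "a \<le> b + u" if "2 * a \<le> b + t" "t \<le> b + u" "0 \<le> u" for a b t u :: real
    using that by linarith
  show ?thesis
    using halve[OF rate_diff tanh_diff] by (simp add: z_def)
qed

lemma jump_rate_shift:
  assumes \<beta>: "\<bar>\<beta>\<bar> \<le> 1" and s: "s \<in> {-1, 1}" and m: "\<bar>m\<bar> \<le> 1"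
  shows "\<bar>jump_rate \<beta> h n s (m + 2 * s / real n) - jump_rate \<beta> h n s m\<bar> \<le> 2 / real n"
proof -
  define T where "T = tanh (\<beta> * m + h + \<beta> * s / real n)"
  define T' where "T' = tanh (\<beta> * (m + 2 * s / real n) + h + \<beta> * s / real n)"
  have abs_s: "\<bar>s\<bar> = 1"
    using s by auto
  have "\<bar>m - (m + 2 * s / real n)\<bar> = 2 / real n"
    using abs_s by (simp add: abs_mult abs_divide)
  moreover have "\<bar>T - T'\<bar> \<le> 2 / real n"
  proof -
    have "\<bar>T - T'\<bar> \<le> \<bar>\<beta>\<bar> * (2 / real n)"
      using abs_tanh_diff_le[of "\<beta> * m + h + \<beta> * s / real n" "\<beta> * (m + 2 * s / real n) + h + \<beta> * s / real n"]
      by (simp add: T_def T'_def algebra_simps abs_mult abs_divide abs_s)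
    also have "\<dots> \<le> 2 / real n"
      by (rule mult_left_le_one_le) (use \<beta> in auto)
    finally show ?thesis .
  qed
  ultimately have "\<bar>m - (m + 2 * s / real n)\<bar> + \<bar>T - T'\<bar> \<le> 2 * (2 / real n)"
    unfolding mult_2 by (metis add_mono order_refl)
  with abs_rate_product_diff[OF s m abs_tanh_le_one]
  have "2 * \<bar>jump_rate \<beta> h n s m - jump_rate \<beta> h n s (m + 2 * s / real n)\<bar> \<le> 2 * (2 / real n)"
    unfolding jump_rate_def T_def T'_def by (rule order_trans)
  then show ?thesis
    by (simp add: abs_minus_commute)
qed

lemma Qk_near_m0:
  assumes "\<bar>\<beta>\<bar> < 1" "\<sigma> \<in> conf n" "n \<ge> 1" "s \<in> {-1, 1}"
  shows "\<bar>Qk \<beta> h n (2 * s) \<sigma> - (1 - (m0 \<beta> h)\<^sup>2) / 4\<bar> \<le> \<bar>magn n \<sigma> - m0 \<beta> h\<bar> + 1 / real n"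
  unfolding Qk_eq_jump_rate[OF assms(2-4)]
  by (rule jump_rate_near_m0[OF assms(1,4) abs_magn_le_one[OF assms(2)]])

lemma Qkk_near_Qk_sq:
  assumes "\<bar>\<beta>\<bar> \<le> 1" "\<sigma> \<in> conf n" "n \<ge> 1" "s \<in> {-1, 1}"
  shows "\<bar>Qkk \<beta> h n (2 * s) \<sigma> - (Qk \<beta> h n (2 * s) \<sigma>)\<^sup>2\<bar> \<le> 2 / real n"
proof -
  define m where "m = magn n \<sigma>"
  have m: "\<bar>m\<bar> \<le> 1"
    unfolding m_def by (rule abs_magn_le_one[OF assms(2)])
  have "\<bar>Qkk \<beta> h n (2 * s) \<sigma> - (Qk \<beta> h n (2 * s) \<sigma>)\<^sup>2\<bar>
      = \<bar>jump_rate \<beta> h n s m\<bar> * \<bar>jump_rate \<beta> h n s (m + 2 * s / real n) - jump_rate \<beta> h n s m\<bar>"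
    unfolding Qkk_eq_jump_rate_mult_Qk[OF assms(2-4)] Qk_eq_jump_rate[OF assms(2-4)] m_def
    by (simp add: power2_eq_square algebra_simps flip: abs_mult)
  also have "\<dots> \<le> 1 * (2 / real n)"
    by (intro mult_mono abs_jump_rate_le_one jump_rate_shift assms m) auto
  finally show ?thesis
    by simp
qed

lemma Zpart_pos: "0 < Zpart \<beta> h n"
  unfolding Zpart_def by (intro sum_pos finite_conf conf_nonempty) auto

lemma gibbs_nonneg: "0 \<le> gibbs \<beta> h n \<sigma>"
  unfolding gibbs_def using Zpart_pos[of \<beta> h n] by simp

lemma sum_gibbs: "(\<Sum>\<sigma>\<in>conf n. gibbs \<beta> h n \<sigma>) = 1"
  unfolding gibbs_def using Zpart_pos[of \<beta> h n] by (simp add: Zpart_def flip: sum_divide_distrib)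

definition flip :: "nat \<Rightarrow> (nat \<Rightarrow> real) \<Rightarrow> nat \<Rightarrow> real" where
  "flip i \<sigma> = \<sigma>(i := - \<sigma> i)"

lemma flip_conf: "\<sigma> \<in> conf n \<Longrightarrow> i < n \<Longrightarrow> flip i \<sigma> \<in> conf n"
  unfolding flip_def using conf_update spin_cases by fastforce

lemma flip_flip [simp]: "flip i (flip i \<sigma>) = \<sigma>"
  unfolding flip_def by auto

lemma sum_conf_flip: "i < n \<Longrightarrow> (\<Sum>\<sigma>\<in>conf n. f (flip i \<sigma>)) = (\<Sum>\<sigma>\<in>conf n. f \<sigma>)"
  by (rule sum.reindex_bij_betw, rule bij_betw_byWitness[where f' = "flip i"]) (auto simp: flip_conf)

lemma gibbs_flip_residual:
  assumes \<sigma>: "\<sigma> \<in> conf n" and i: "i < n"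
  shows "gibbs \<beta> h n (flip i \<sigma>) * (flip i \<sigma> i - tanh (local_field \<beta> h n (flip i \<sigma>) i))
       = - (gibbs \<beta> h n \<sigma> * (\<sigma> i - tanh (local_field \<beta> h n \<sigma> i)))"
proof -
  define t where "t = \<sigma> i"
  define a where "a = local_field \<beta> h n \<sigma> i"
  obtain K where K: "\<And>t. t \<in> {-1, 1} \<Longrightarrow> ham \<beta> h n (\<sigma>(i := t)) = K + t * a"
    using ham_update_affine[OF \<sigma> i] unfolding a_def by blast
  have t: "t \<in> {-1, 1}" "- t \<in> {-1, 1}"
    using spin_cases[OF \<sigma> i] by (auto simp: t_def)
  have flip_eq: "flip i \<sigma> = \<sigma>(i := - t)"
    by (simp add: flip_def t_def)
  define P where "P = exp K / Zpart \<beta> h n"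
  have gibbs_\<sigma>: "gibbs \<beta> h n \<sigma> = P * exp (t * a)"
    using K[OF t(1)] by (simp add: gibbs_def P_def t_def flip: exp_add)
  have gibbs_flip: "gibbs \<beta> h n (flip i \<sigma>) = P * exp (- t * a)"
    using K[OF t(2)] by (simp add: gibbs_def P_def flip_eq flip: exp_add)
  have local_field_flip: "local_field \<beta> h n (flip i \<sigma>) i = a"
    using local_field_update[OF i] by (simp add: flip_eq a_def)
  have "gibbs \<beta> h n (flip i \<sigma>) * (flip i \<sigma> i - tanh (local_field \<beta> h n (flip i \<sigma>) i))
      = P * (exp (- t * a) * (- t - tanh a))"
    unfolding gibbs_flip local_field_flip by (simp add: flip_eq)
  also have "exp (- t * a) * (- t - tanh a) = - (exp (t * a) * (t - tanh a))"
    using t(1) exp_mult_one_minus_tanh[of a] by (auto simp: algebra_simps)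
  finally show ?thesis
    by (simp add: gibbs_\<sigma> t_def a_def)
qed

lemma sum_gibbs_residual_flip_invariant:
  assumes i: "i < n" and g: "\<And>\<sigma>. \<sigma> \<in> conf n \<Longrightarrow> g (flip i \<sigma>) = g \<sigma>"
  shows "(\<Sum>\<sigma>\<in>conf n. gibbs \<beta> h n \<sigma> * (\<sigma> i - tanh (local_field \<beta> h n \<sigma> i)) * g \<sigma>) = 0"
proof -
  let ?F = "\<lambda>\<sigma>. gibbs \<beta> h n \<sigma> * (\<sigma> i - tanh (local_field \<beta> h n \<sigma> i)) * g \<sigma>"
  have "(\<Sum>\<sigma>\<in>conf n. ?F \<sigma>) = (\<Sum>\<sigma>\<in>conf n. ?F (flip i \<sigma>))"
    by (rule sum_conf_flip[OF i, symmetric])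
  also have "\<dots> = - (\<Sum>\<sigma>\<in>conf n. ?F \<sigma>)"
    unfolding sum_negf[symmetric]
    by (intro sum.cong refl) (simp add: gibbs_flip_residual[OF _ i] g)
  finally show ?thesis
    by simp
qed

lemma sum_gibbs_residual_magn_le:
  assumes i: "i < n"
  shows "(\<Sum>\<sigma>\<in>conf n. gibbs \<beta> h n \<sigma> * ((\<sigma> i - tanh (local_field \<beta> h n \<sigma> i)) * (magn n \<sigma> - z)))
    \<le> 2 / real n"
proof -
  define r where "r \<sigma> = \<sigma> i - tanh (local_field \<beta> h n \<sigma> i)" for \<sigma>
  define g where "g \<sigma> = magn n \<sigma> - \<sigma> i / real n - z" for \<sigma>
  have g_flip: "g (flip i \<sigma>) = g \<sigma>" for \<sigma>
    using Wsum_update[OF i, of \<sigma> "- \<sigma> i"] by (simp add: g_def flip_def magn_def diff_divide_distrib)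
  have r_le: "r \<sigma> * \<sigma> i \<le> 2" if "\<sigma> \<in> conf n" for \<sigma>
    using spin_cases[OF that i] abs_tanh_le_one[of "local_field \<beta> h n \<sigma> i"]
    by (auto simp: r_def abs_le_iff)
  have "gibbs \<beta> h n \<sigma> * (r \<sigma> * (magn n \<sigma> - z))
      = gibbs \<beta> h n \<sigma> * r \<sigma> * g \<sigma> + gibbs \<beta> h n \<sigma> * (r \<sigma> * \<sigma> i) / real n" for \<sigma>
    by (cases "n = 0") (simp_all add: g_def field_simps)
  then have "(\<Sum>\<sigma>\<in>conf n. gibbs \<beta> h n \<sigma> * (r \<sigma> * (magn n \<sigma> - z)))
      = (\<Sum>\<sigma>\<in>conf n. gibbs \<beta> h n \<sigma> * r \<sigma> * g \<sigma>) + (\<Sum>\<sigma>\<in>conf n. gibbs \<beta> h n \<sigma> * (r \<sigma> * \<sigma> i) / real n)"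
    by (simp add: sum.distrib)
  also have "(\<Sum>\<sigma>\<in>conf n. gibbs \<beta> h n \<sigma> * r \<sigma> * g \<sigma>) = 0"
    unfolding r_def by (rule sum_gibbs_residual_flip_invariant[OF i]) (rule g_flip)
  also have "(\<Sum>\<sigma>\<in>conf n. gibbs \<beta> h n \<sigma> * (r \<sigma> * \<sigma> i) / real n) \<le> (\<Sum>\<sigma>\<in>conf n. gibbs \<beta> h n \<sigma> * 2 / real n)"
    by (intro sum_mono divide_right_mono mult_left_mono r_le gibbs_nonneg) auto
  also have "\<dots> = 2 / real n"
    by (simp add: sum_gibbs flip: sum_divide_distrib sum_distrib_right)
  finally show ?thesis
    by (simp add: r_def)
qed

lemma abs_mean_tanh_local_field_diff:
  assumes \<sigma>: "\<sigma> \<in> conf n" and n: "n \<ge> 1"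
  shows "\<bar>(\<Sum>i<n. tanh (local_field \<beta> h n \<sigma> i)) / real n - tanh (\<beta> * magn n \<sigma> + h)\<bar> \<le> \<bar>\<beta>\<bar> / real n"
proof -
  have "\<bar>tanh (local_field \<beta> h n \<sigma> i) - tanh (\<beta> * magn n \<sigma> + h)\<bar> \<le> \<bar>\<beta>\<bar> / real n" if "i < n" for i
  proof -
    have "local_field \<beta> h n \<sigma> i - (\<beta> * magn n \<sigma> + h) = - \<beta> * \<sigma> i / real n"
      using n by (simp add: local_field_def magn_def field_simps)
    then show ?thesis
      using abs_tanh_diff_le[of "local_field \<beta> h n \<sigma> i" "\<beta> * magn n \<sigma> + h"] abs_spin[OF \<sigma> that]
      by (simp add: abs_mult abs_divide)
  qed
  then have "\<bar>\<Sum>i<n. tanh (local_field \<beta> h n \<sigma> i) - tanh (\<beta> * magn n \<sigma> + h)\<bar> \<le> (\<Sum>i<n. \<bar>\<beta>\<bar> / real n)"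
    by (intro order_trans[OF sum_abs sum_mono]) simp
  also have "\<dots> = \<bar>\<beta>\<bar>"
    using n by simp
  finally have "\<bar>\<Sum>i<n. tanh (local_field \<beta> h n \<sigma> i) - tanh (\<beta> * magn n \<sigma> + h)\<bar> / real n \<le> \<bar>\<beta>\<bar> / real n"
    by (rule divide_right_mono) simp
  moreover have "(\<Sum>i<n. tanh (local_field \<beta> h n \<sigma> i)) / real n - tanh (\<beta> * magn n \<sigma> + h)
      = (\<Sum>i<n. tanh (local_field \<beta> h n \<sigma> i) - tanh (\<beta> * magn n \<sigma> + h)) / real n"
    using n by (simp add: sum_subtractf field_simps)
  ultimately show ?thesis
    by (simp add: abs_divide)
qed

lemma magn_sq_dev_le:
  assumes \<beta>: "\<bar>\<beta>\<bar> < 1" and \<sigma>: "\<sigma> \<in> conf n" and n: "n \<ge> 1"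
  shows "(1 - \<bar>\<beta>\<bar>) * (magn n \<sigma> - m0 \<beta> h)\<^sup>2
    \<le> (\<Sum>i<n. (\<sigma> i - tanh (local_field \<beta> h n \<sigma> i)) * (magn n \<sigma> - m0 \<beta> h)) / real n + 2 * \<bar>\<beta>\<bar> / real n"
proof -
  define m where "m = magn n \<sigma>"
  define z where "z = m0 \<beta> h"
  define e where "e = (\<Sum>i<n. tanh (local_field \<beta> h n \<sigma> i)) / real n - tanh (\<beta> * m + h)"
  have mz: "\<bar>m - z\<bar> \<le> 2"
    using abs_magn_le_one[OF \<sigma>] abs_m0_le_one[OF \<beta>, of h] abs_triangle_ineq4[of m z]
    unfolding m_def z_def by linarith
  have e: "\<bar>e\<bar> \<le> \<bar>\<beta>\<bar> / real n"
    unfolding e_def m_def by (rule abs_mean_tanh_local_field_diff[OF \<sigma> n])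
  have "\<bar>e * (m - z)\<bar> \<le> \<bar>\<beta>\<bar> / real n * 2"
    unfolding abs_mult using e mz by (intro mult_mono) auto
  then have "e * (m - z) \<le> 2 * \<bar>\<beta>\<bar> / real n"
    by (auto dest: abs_le_D1 simp: algebra_simps)
  have "(1 - \<bar>\<beta>\<bar>) * (m - z)\<^sup>2 \<le> (m - tanh (\<beta> * m + h)) * (m - z)"
    using contraction_sq_le m0_fixed_point[OF \<beta>] by (simp add: z_def)
  also have "m - tanh (\<beta> * m + h) = (\<Sum>i<n. \<sigma> i - tanh (local_field \<beta> h n \<sigma> i)) / real n + e"
    using n by (simp add: e_def m_def magn_def Wsum_def sum_subtractf diff_divide_distrib)
  finally show ?thesis
    using \<open>e * (m - z) \<le> 2 * \<bar>\<beta>\<bar> / real n\<close>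
    by (simp add: m_def z_def distrib_right sum_distrib_right sum_divide_distrib)
qed

lemma gibbs_mean_sq_magn_dev:
  assumes \<beta>: "\<bar>\<beta>\<bar> < 1" and n: "n \<ge> 1"
  shows "(\<Sum>\<sigma>\<in>conf n. gibbs \<beta> h n \<sigma> * (magn n \<sigma> - m0 \<beta> h)\<^sup>2) \<le> 4 / ((1 - \<bar>\<beta>\<bar>) * real n)"
proof -
  define z where "z = m0 \<beta> h"
  define R where "R \<sigma> i = (\<sigma> i - tanh (local_field \<beta> h n \<sigma> i)) * (magn n \<sigma> - z)" for \<sigma> i
  have "(1 - \<bar>\<beta>\<bar>) * (\<Sum>\<sigma>\<in>conf n. gibbs \<beta> h n \<sigma> * (magn n \<sigma> - z)\<^sup>2)
      = (\<Sum>\<sigma>\<in>conf n. gibbs \<beta> h n \<sigma> * ((1 - \<bar>\<beta>\<bar>) * (magn n \<sigma> - z)\<^sup>2))"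
    by (simp add: sum_distrib_left algebra_simps)
  also have "\<dots> \<le> (\<Sum>\<sigma>\<in>conf n. gibbs \<beta> h n \<sigma> * ((\<Sum>i<n. R \<sigma> i) / real n + 2 * \<bar>\<beta>\<bar> / real n))"
    unfolding R_def z_def by (intro sum_mono mult_left_mono gibbs_nonneg magn_sq_dev_le[OF \<beta> _ n])
  also have "\<dots> = (\<Sum>i<n. \<Sum>\<sigma>\<in>conf n. gibbs \<beta> h n \<sigma> * R \<sigma> i) / real n + 2 * \<bar>\<beta>\<bar> / real n"
    by (simp add: distrib_left sum.distrib sum_gibbs sum_distrib_left sum.swap[of _ "conf n"]
        flip: sum_distrib_right sum_divide_distrib)
  also have "\<dots> \<le> (\<Sum>i<n. 2 / real n) / real n + 2 * \<bar>\<beta>\<bar> / real n"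
    unfolding R_def by (intro add_mono divide_right_mono sum_mono sum_gibbs_residual_magn_le) auto
  also have "\<dots> \<le> 4 / real n"
    using n \<beta> by (simp add: field_simps)
  finally show ?thesis
    using \<beta> n by (simp add: z_def field_simps)
qed

lemma sum_weighted_sq_dev:
  fixes p x :: "'a \<Rightarrow> real"
  assumes "(\<Sum>a\<in>S. p a) = 1"
  shows "(\<Sum>a\<in>S. p a * (x a - c)\<^sup>2)
    = (\<Sum>a\<in>S. p a * (x a - (\<Sum>b\<in>S. p b * x b))\<^sup>2) + ((\<Sum>b\<in>S. p b * x b) - c)\<^sup>2"
proof -
  define \<mu> where "\<mu> = (\<Sum>b\<in>S. p b * x b)"
  have "(\<Sum>a\<in>S. p a * (x a - \<mu>)) = 0"
    using assms by (simp add: right_diff_distrib sum_subtractf \<mu>_def flip: sum_distrib_right)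
  moreover have "p a * (x a - c)\<^sup>2
      = p a * (x a - \<mu>)\<^sup>2 + 2 * (\<mu> - c) * (p a * (x a - \<mu>)) + (\<mu> - c)\<^sup>2 * p a" for a
    by (simp add: power2_eq_square algebra_simps)
  then have "(\<Sum>a\<in>S. p a * (x a - c)\<^sup>2)
      = (\<Sum>a\<in>S. p a * (x a - \<mu>)\<^sup>2) + 2 * (\<mu> - c) * (\<Sum>a\<in>S. p a * (x a - \<mu>)) + (\<mu> - c)\<^sup>2 * (\<Sum>a\<in>S. p a)"
    by (simp add: sum.distrib sum_distrib_left)
  ultimately show ?thesis
    using assms by (simp add: \<mu>_def)
qed

lemma gibbs_mean_sq_Qk_dev:
  assumes \<beta>: "\<bar>\<beta>\<bar> < 1" and n: "n \<ge> 1" and s: "s \<in> {-1, 1}"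
  shows "(\<Sum>\<sigma>\<in>conf n. gibbs \<beta> h n \<sigma> * (Qk \<beta> h n (2 * s) \<sigma> - (1 - (m0 \<beta> h)\<^sup>2) / 4)\<^sup>2)
    \<le> 10 / ((1 - \<bar>\<beta>\<bar>) * real n)"
proof -
  define z where "z = m0 \<beta> h"
  have "(Qk \<beta> h n (2 * s) \<sigma> - (1 - z\<^sup>2) / 4)\<^sup>2 \<le> 2 * (magn n \<sigma> - z)\<^sup>2 + 2 / real n"
    if \<sigma>: "\<sigma> \<in> conf n" for \<sigma>
  proof -
    define d where "d = \<bar>magn n \<sigma> - z\<bar>"
    have "(Qk \<beta> h n (2 * s) \<sigma> - (1 - z\<^sup>2) / 4)\<^sup>2 \<le> (d + 1 / real n)\<^sup>2"
      using Qk_near_m0[OF \<beta> \<sigma> n s] unfolding d_def z_def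
      by (metis abs_ge_zero power2_abs power_mono)
    also have "\<dots> \<le> 2 * d\<^sup>2 + 2 * (1 / real n)\<^sup>2"
      using sum_squares_ge_zero[of "d - 1 / real n" 0] by (simp add: power2_eq_square algebra_simps)
    also have "(1 / real n)\<^sup>2 \<le> 1 / real n"
      using n by (simp add: power2_eq_square divide_le_eq)
    finally show ?thesis
      by (simp add: d_def)
  qed
  then have "(\<Sum>\<sigma>\<in>conf n. gibbs \<beta> h n \<sigma> * (Qk \<beta> h n (2 * s) \<sigma> - (1 - z\<^sup>2) / 4)\<^sup>2)
      \<le> (\<Sum>\<sigma>\<in>conf n. gibbs \<beta> h n \<sigma> * (2 * (magn n \<sigma> - z)\<^sup>2 + 2 / real n))"
    by (intro sum_mono mult_left_mono gibbs_nonneg)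
  also have "\<dots> = 2 * (\<Sum>\<sigma>\<in>conf n. gibbs \<beta> h n \<sigma> * (magn n \<sigma> - z)\<^sup>2)
      + 2 / real n * (\<Sum>\<sigma>\<in>conf n. gibbs \<beta> h n \<sigma>)"
    by (simp add: sum.distrib sum_distrib_left algebra_simps)
  also have "\<dots> = 2 * (\<Sum>\<sigma>\<in>conf n. gibbs \<beta> h n \<sigma> * (magn n \<sigma> - z)\<^sup>2) + 2 / real n"
    by (simp add: sum_gibbs)
  also have "\<dots> \<le> 2 * (4 / ((1 - \<bar>\<beta>\<bar>) * real n)) + 2 / ((1 - \<bar>\<beta>\<bar>) * real n)"
    using gibbs_mean_sq_magn_dev[OF \<beta> n, of h] \<beta> n
    by (intro add_mono mult_left_mono) (auto simp: z_def field_simps)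
  finally show ?thesis
    by (simp add: z_def ac_simps)
qed

lemma varQ_nonneg: "0 \<le> varQ \<beta> h n k"
  unfolding varQ_def by (intro sum_nonneg mult_nonneg_nonneg gibbs_nonneg) simp

lemma varQ_add_sq_qk_dev_le:
  assumes "\<bar>\<beta>\<bar> < 1" "n \<ge> 1" "s \<in> {-1, 1}"
  shows "varQ \<beta> h n (2 * s) + (qk \<beta> h n (2 * s) - (1 - (m0 \<beta> h)\<^sup>2) / 4)\<^sup>2
    \<le> 10 / ((1 - \<bar>\<beta>\<bar>) * real n)"
  unfolding varQ_def qk_def sum_weighted_sq_dev[OF sum_gibbs, symmetric]
  by (rule gibbs_mean_sq_Qk_dev[OF assms])

lemma abs_le_div_sqrt:
  fixes x C :: real
  assumes "x\<^sup>2 \<le> C / real n" and "1 \<le> C"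
  shows "\<bar>x\<bar> \<le> C / sqrt (real n)"
proof -
  have "\<bar>x\<bar> \<le> sqrt (C / real n)"
    using assms(1) by (intro real_le_rsqrt) simp
  also have "\<dots> = sqrt C / sqrt (real n)"
    by (rule real_sqrt_divide)
  also have "sqrt C \<le> C"
    using assms(2) by (intro real_le_lsqrt) (auto simp: power2_eq_square)
  then have "sqrt C / sqrt (real n) \<le> C / sqrt (real n)"
    by (rule divide_right_mono) simp
  finally show ?thesis .
qed

theorem lemma8:
  fixes \<beta> h :: real
  assumes "0 < \<beta>" and "\<beta> < 1"
  shows "\<exists>C. \<forall>n::nat. n \<ge> 1 \<longrightarrow> (\<forall>k\<in>{-2, 2::real}.
           (\<forall>\<sigma>\<in>conf n.
              \<bar>Qk \<beta> h n k \<sigma> - (1 - (m0 \<beta> h)\<^sup>2) / 4\<bar> \<le> C * (\<bar>magn n \<sigma> - m0 \<beta> h\<bar> + 1 / real n)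
            \<and> \<bar>Qkk \<beta> h n k \<sigma> - (Qk \<beta> h n k \<sigma>)\<^sup>2\<bar> \<le> C / real n)
         \<and> \<bar>qk \<beta> h n k - (1 - (m0 \<beta> h)\<^sup>2) / 4\<bar> \<le> C / sqrt (real n)
         \<and> varQ \<beta> h n k \<le> C / real n)"
proof -
  define C where "C = 10 / (1 - \<beta>)"
  have \<beta>: "\<bar>\<beta>\<bar> < 1" "\<bar>\<beta>\<bar> \<le> 1" and C: "10 \<le> C"
    using assms by (auto simp: C_def field_simps)
  have le_C: "x \<le> C * x" if "0 \<le> x" for x
    using mult_right_mono[OF _ that, of 1 C] C by simp
  show ?thesis
  proof (intro exI[of _ C] allI impI ballI conjI)
    fix n :: nat and k :: real and \<sigma>
    assume n: "1 \<le> n" and "k \<in> {-2, 2}"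
    then obtain s where s: "s \<in> {-1, 1}" and k: "k = 2 * s"
      by (intro that[of "k / 2"]) auto
    show "\<bar>Qk \<beta> h n k \<sigma> - (1 - (m0 \<beta> h)\<^sup>2) / 4\<bar> \<le> C * (\<bar>magn n \<sigma> - m0 \<beta> h\<bar> + 1 / real n)"
      if "\<sigma> \<in> conf n"
      unfolding k
      by (rule order_trans[OF Qk_near_m0[OF \<beta>(1) that n s, where h = h] le_C]) simp
    show "\<bar>Qkk \<beta> h n k \<sigma> - (Qk \<beta> h n k \<sigma>)\<^sup>2\<bar> \<le> C / real n" if "\<sigma> \<in> conf n"
      unfolding k using C
      by (intro order_trans[OF Qkk_near_Qk_sq[OF \<beta>(2) that n s, where h = h]] divide_right_mono) auto
    have dev: "varQ \<beta> h n k + (qk \<beta> h n k - (1 - (m0 \<beta> h)\<^sup>2) / 4)\<^sup>2 \<le> C / real n"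
      using varQ_add_sq_qk_dev_le[OF \<beta>(1) n s] assms unfolding k C_def
      by (simp add: divide_divide_eq_left)
    then show "varQ \<beta> h n k \<le> C / real n"
      using zero_le_power2[of "qk \<beta> h n k - (1 - (m0 \<beta> h)\<^sup>2) / 4"] by linarith
    show "\<bar>qk \<beta> h n k - (1 - (m0 \<beta> h)\<^sup>2) / 4\<bar> \<le> C / sqrt (real n)"
      using dev varQ_nonneg[of \<beta> h n k] C by (intro abs_le_div_sqrt) linarith+
  qed
qed

end
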